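(* Let $k>l\ge0$ be integers, $\xi\in\mathbb{C}$, $f:\mathbb{N}\to[0,\infty)$, and $A=\xi(a^\dagger)^ka^l+\xi^*(a^\dagger)^la^k+f(a^\dagger a)$ with domain $\mathcal{D}_0$. Assume there exist $\kappa\ge2$ and $N\in\mathbb{N}$ such that $f(n)\ge\kappa|\xi|\beta^{kl}_n$ for all $n\ge N$. Then $A$ is essentially self-adjoint. In particular, if $\kappa>2$, then $A$ is bounded from below by $-2|\xi|\beta^{kl}_{N-1}\kappa/(\kappa-2)$, i.e. $\langle\psi,A\psi\rangle\ge-\frac{2|\xi|\beta^{kl}_{N-1}\kappa}{\kappa-2}\|\psi\|^2$ for all $\psi\in\mathcal{D}_0$.
   Context: $\mathbb{N}=\{0,1,2,\dots\}$. $\mathcal{H}$ is a separable complex Hilbert space with orthonormal basis $(\phi_n)_{n\in\mathbb{N}}$; $\mathcal{D}_0$ is the set of finite linear combinations of the $\phi_n$. The operators $a,a^\dagger$ have domain $\mathcal{D}_0$ and act by $a\phi_n=\sqrt{n}\,\phi_{n-1}$ ($a\phi_0=0$), $a^\dagger\phi_n=\sqrt{n+1}\,\phi_{n+1}$, extended linearly. $f(a^\dagger a)$ has domain $\mathcal{D}_0$ and $f(a^\dagger a)\phi_n=f(n)\phi_n$. For integers $x$ and $s\ge0$, $(x,s)=x(x+1)\cdots(x+s-1)$ ($=1$ if $s=0$), with the convention $(x,s)=0$ whenever $x$ is a negative integer; for integers $n$ and $k,l\ge0$, $\beta^{kl}_n=\sqrt{(n-l+1,l)(n-l+1,k)}$.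 *)

theory Defs
  imports "HOL-Analysis.Analysis"
begin

text \<open>The Hilbert space H with orthonormal basis phi_n is modelled concretely as l2(N):
  vectors are square-summable sequences nat => complex, phi_n is the indicator of n.\<close>

definition ell2 :: "(nat \<Rightarrow> complex) set" where
  "ell2 = {x. summable (\<lambda>n. (cmod (x n))\<^sup>2)}"

definition l2inner :: "(nat \<Rightarrow> complex) \<Rightarrow> (nat \<Rightarrow> complex) \<Rightarrow> complex" where
  "l2inner x y = (\<Sum>n. cnj (x n) * y n)"

definition l2norm :: "(nat \<Rightarrow> complex) \<Rightarrow> real" where
  "l2norm x = sqrt (\<Sum>n. (cmod (x n))\<^sup>2)"

text \<open>D_0: finite linear combinations of the basis vectors = finitely supported sequences.\<close>
definition D0 :: "(nat \<Rightarrow> complex) set" where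
  "D0 = {x. finite {n. x n \<noteq> 0}}"

text \<open>Annihilation / creation operators (on coefficient sequences):
  a phi_n = sqrt n phi_(n-1), a^dagger phi_n = sqrt (n+1) phi_(n+1).\<close>
definition ann :: "(nat \<Rightarrow> complex) \<Rightarrow> (nat \<Rightarrow> complex)" where
  "ann x = (\<lambda>n. complex_of_real (sqrt (real (n + 1))) * x (n + 1))"

definition cre :: "(nat \<Rightarrow> complex) \<Rightarrow> (nat \<Rightarrow> complex)" where
  "cre x = (\<lambda>n. if n = 0 then 0 else complex_of_real (sqrt (real n)) * x (n - 1))"

definition numfun :: "(nat \<Rightarrow> real) \<Rightarrow> (nat \<Rightarrow> complex) \<Rightarrow> (nat \<Rightarrow> complex)" where
  "numfun f x = (\<lambda>n. complex_of_real (f n) * x n)"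

definition A_op :: "nat \<Rightarrow> nat \<Rightarrow> complex \<Rightarrow> (nat \<Rightarrow> real) \<Rightarrow> (nat \<Rightarrow> complex) \<Rightarrow> (nat \<Rightarrow> complex)" where
  "A_op k l \<xi> f x = (\<lambda>n. \<xi> * (cre ^^ k) ((ann ^^ l) x) n
                        + cnj \<xi> * (cre ^^ l) ((ann ^^ k) x) n
                        + numfun f x n)"

text \<open>Operators are represented by their graphs (subsets of H x H).\<close>
definition graph_D0 :: "((nat \<Rightarrow> complex) \<Rightarrow> (nat \<Rightarrow> complex)) \<Rightarrow> ((nat \<Rightarrow> complex) \<times> (nat \<Rightarrow> complex)) set" where
  "graph_D0 T = {(x, T x) | x. x \<in> D0}"

definition graph_closure :: "((nat \<Rightarrow> complex) \<times> (nat \<Rightarrow> complex)) set \<Rightarrow> ((nat \<Rightarrow> complex) \<times> (nat \<Rightarrow> complex)) set" where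
  "graph_closure G = {(x, y). x \<in> ell2 \<and> y \<in> ell2 \<and>
      (\<exists>s :: nat \<Rightarrow> (nat \<Rightarrow> complex) \<times> (nat \<Rightarrow> complex). (\<forall>j. s j \<in> G) \<and>
         (\<lambda>j. l2norm (\<lambda>n. fst (s j) n - x n)) \<longlonglongrightarrow> 0 \<and>
         (\<lambda>j. l2norm (\<lambda>n. snd (s j) n - y n)) \<longlonglongrightarrow> 0)}"

definition graph_adjoint :: "((nat \<Rightarrow> complex) \<times> (nat \<Rightarrow> complex)) set \<Rightarrow> ((nat \<Rightarrow> complex) \<times> (nat \<Rightarrow> complex)) set" where
  "graph_adjoint G = {(u, v). u \<in> ell2 \<and> v \<in> ell2 \<and> (\<forall>(x, y) \<in> G. l2inner u y = l2inner v x)}"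

definition self_adjoint_graph :: "((nat \<Rightarrow> complex) \<times> (nat \<Rightarrow> complex)) set \<Rightarrow> bool" where
  "self_adjoint_graph G \<longleftrightarrow> G = graph_adjoint G"

definition ess_self_adjoint :: "((nat \<Rightarrow> complex) \<times> (nat \<Rightarrow> complex)) set \<Rightarrow> bool" where
  "ess_self_adjoint G \<longleftrightarrow> self_adjoint_graph (graph_closure G)"

definition rising :: "int \<Rightarrow> nat \<Rightarrow> int" where
  "rising x s = (if x < 0 then 0 else (\<Prod>i<s. x + int i))"

definition beta :: "nat \<Rightarrow> nat \<Rightarrow> int \<Rightarrow> real" where
  "beta k l n = sqrt (real_of_int (rising (n - int l + 1) l * rising (n - int l + 1) k))"

end

theory Submission
  imports Defs
begin

(* In the basis phi_n the operator A is the Hermitian band matrix with diagonal f, bandwidth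
   d = k - l and entries xi beta_m at (m + d, m) and cnj xi beta_m at (m, m + d), because
   (a^dagger)^k a^l phi_m = beta_m phi_(m+d).  As beta is increasing, the hypothesis says that the
   diagonal dominates the off-diagonal row sums: |xi| (beta_(n-d) + beta_n) <= 2 |xi| beta_n <= f n
   for n >= N.

   Essential self-adjointness follows from von Neumann's criterion.  The adjoint of the closure acts
   coefficientwise by the same band matrix, so an element of ker (A^* -/+ i t) is a square-summable
   solution of the eigenvalue equation; at a coefficient of maximal modulus, |f n -/+ i t| exceeds
   the off-diagonal row sum once t is large, which forces the solution to vanish.  The range of
   closure(A) - i t is all of l2: on D0, |(A - i t) x|^2 = |A x|^2 + t^2 |x|^2, so a sequence
   minimising the distance to a given z converges in the graph norm, and the residual of its limit is
   orthogonal to the range, hence again such an eigenvector.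

   For the lower bound, AM-GM on the off-diagonal terms gives
   Re <psi, A psi> >= sum_n (f n - |xi| (beta_(n-d) + beta_n)) |psi_n|^2; the summands are
   nonnegative for n >= N and at least -2 |xi| beta_(N-1) |psi_n|^2 below N.  This is stronger than
   the stated bound, as kappa / (kappa - 2) >= 1. *)

section \<open>Square-summable sequences\<close>

lemma ell2_add:
  assumes "x \<in> ell2" "y \<in> ell2"
  shows "(\<lambda>n. x n + y n) \<in> ell2"
proof -
  have "summable (\<lambda>n. 2 * (cmod (x n))\<^sup>2 + 2 * (cmod (y n))\<^sup>2)"
    using assms unfolding ell2_def by (simp add: summable_add summable_mult)
  moreover have "(cmod (x n + y n))\<^sup>2 \<le> 2 * (cmod (x n))\<^sup>2 + 2 * (cmod (y n))\<^sup>2" for n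
  proof -
    have "(cmod (x n + y n))\<^sup>2 \<le> (cmod (x n) + cmod (y n))\<^sup>2"
      by (simp add: norm_triangle_ineq power_mono)
    also have "\<dots> \<le> 2 * (cmod (x n))\<^sup>2 + 2 * (cmod (y n))\<^sup>2"
      unfolding power2_sum using sum_squares_bound[of "cmod (x n)" "cmod (y n)"] by linarith
    finally show ?thesis .
  qed
  ultimately show ?thesis
    unfolding ell2_def by (simp add: summable_comparison_test'[where N = 0])
qed

lemma ell2_mult: "x \<in> ell2 \<Longrightarrow> (\<lambda>n. a * x n) \<in> ell2"
  unfolding ell2_def by (simp add: norm_mult power_mult_distrib summable_mult)

lemma ell2_diff: "x \<in> ell2 \<Longrightarrow> y \<in> ell2 \<Longrightarrow> (\<lambda>n. x n - y n) \<in> ell2"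
  using ell2_add[of x "\<lambda>n. -1 * y n"] ell2_mult[of y "-1"] by simp

lemma D0_imp_ell2: "x \<in> D0 \<Longrightarrow> x \<in> ell2"
  unfolding D0_def ell2_def by (auto intro!: summable_finite)

lemma l2norm_power2: "x \<in> ell2 \<Longrightarrow> (l2norm x)\<^sup>2 = (\<Sum>n. (cmod (x n))\<^sup>2)"
  unfolding ell2_def l2norm_def by (simp add: suminf_nonneg)

lemma l2norm_nonneg: "x \<in> ell2 \<Longrightarrow> 0 \<le> l2norm x"
  unfolding ell2_def l2norm_def by (simp add: suminf_nonneg)

lemma l2norm_zero [simp]: "l2norm (\<lambda>n. 0) = 0"
  by (simp add: l2norm_def)

lemma sum_le_l2norm_power2:
  assumes "x \<in> ell2" "finite I"
  shows "(\<Sum>n\<in>I. (cmod (x n))\<^sup>2) \<le> (l2norm x)\<^sup>2"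
proof -
  have "summable (\<lambda>n. (cmod (x n))\<^sup>2)"
    using assms(1) by (simp add: ell2_def)
  then show ?thesis
    unfolding l2norm_power2[OF assms(1)] by (rule sum_le_suminf) (simp_all add: assms(2))
qed

lemma norm_le_l2norm:
  assumes "x \<in> ell2"
  shows "cmod (x n) \<le> l2norm x"
proof (rule power2_le_imp_le)
  show "(cmod (x n))\<^sup>2 \<le> (l2norm x)\<^sup>2"
    using sum_le_l2norm_power2[OF assms, of "{n}"] by simp
qed (rule l2norm_nonneg[OF assms])

lemma summable_norm_l2inner:
  assumes "x \<in> ell2" "y \<in> ell2"
  shows "summable (\<lambda>n. cmod (x n) * cmod (y n))"
proof (rule summable_comparison_test'[where N = 0])
  show "summable (\<lambda>n. (cmod (x n))\<^sup>2 + (cmod (y n))\<^sup>2)"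
    using assms unfolding ell2_def by (simp add: summable_add)
  show "norm (cmod (x n) * cmod (y n)) \<le> (cmod (x n))\<^sup>2 + (cmod (y n))\<^sup>2" for n
  proof -
    have "2 * cmod (x n) * cmod (y n) \<le> (cmod (x n))\<^sup>2 + (cmod (y n))\<^sup>2"
      by (rule sum_squares_bound)
    moreover have "0 \<le> cmod (x n) * cmod (y n)"
      by simp
    ultimately show ?thesis
      by (simp only: real_norm_def abs_of_nonneg)
  qed
qed

lemma summable_l2inner:
  assumes "x \<in> ell2" "y \<in> ell2"
  shows "summable (\<lambda>n. cnj (x n) * y n)"
  using summable_norm_l2inner[OF assms] by (rule summable_comparison_test'[where N = 0]) (simp add: norm_mult)

lemma l2inner_add_left:
  "x \<in> ell2 \<Longrightarrow> y \<in> ell2 \<Longrightarrow> z \<in> ell2 \<Longrightarrow> l2inner (\<lambda>n. x n + y n) z = l2inner x z + l2inner y z"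
  unfolding l2inner_def by (simp add: distrib_right suminf_add summable_l2inner)

lemma l2inner_add_right:
  "x \<in> ell2 \<Longrightarrow> y \<in> ell2 \<Longrightarrow> z \<in> ell2 \<Longrightarrow> l2inner x (\<lambda>n. y n + z n) = l2inner x y + l2inner x z"
  unfolding l2inner_def by (simp add: distrib_left suminf_add summable_l2inner)

lemma l2inner_diff_left:
  "x \<in> ell2 \<Longrightarrow> y \<in> ell2 \<Longrightarrow> z \<in> ell2 \<Longrightarrow> l2inner (\<lambda>n. x n - y n) z = l2inner x z - l2inner y z"
  unfolding l2inner_def by (simp add: left_diff_distrib suminf_diff summable_l2inner)

lemma l2inner_diff_right:
  "x \<in> ell2 \<Longrightarrow> y \<in> ell2 \<Longrightarrow> z \<in> ell2 \<Longrightarrow> l2inner x (\<lambda>n. y n - z n) = l2inner x y - l2inner x z"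
  unfolding l2inner_def by (simp add: right_diff_distrib suminf_diff summable_l2inner)

lemma l2inner_mult_right:
  assumes "x \<in> ell2" "y \<in> ell2"
  shows "l2inner x (\<lambda>n. a * y n) = a * l2inner x y"
  using suminf_mult[OF summable_l2inner[OF assms], of a]
  unfolding l2inner_def by (simp add: mult.left_commute)

lemma l2inner_commute:
  assumes "x \<in> ell2" "y \<in> ell2"
  shows "l2inner y x = cnj (l2inner x y)"
proof -
  have "(\<lambda>n. cnj (cnj (x n) * y n)) sums cnj (l2inner x y)"
    unfolding l2inner_def using summable_sums[OF summable_l2inner[OF assms]] by (simp only: sums_cnj)
  moreover have "(\<lambda>n. cnj (cnj (x n) * y n)) = (\<lambda>n. cnj (y n) * x n)"
    by (simp add: mult.commute)
  ultimately show ?thesis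
    unfolding l2inner_def by (simp add: sums_iff)
qed

lemma l2inner_self:
  assumes "x \<in> ell2"
  shows "l2inner x x = of_real ((l2norm x)\<^sup>2)"
proof -
  have "(\<lambda>n. cnj (x n) * x n) = (\<lambda>n. of_real ((cmod (x n))\<^sup>2))"
    by (rule ext) (metis complex_norm_square mult.commute)
  then show ?thesis
    using assms unfolding l2inner_def ell2_def by (simp add: l2norm_power2 ell2_def suminf_of_real)
qed

lemma l2inner_cauchy_schwarz:
  assumes "x \<in> ell2" "y \<in> ell2"
  shows "cmod (l2inner x y) \<le> l2norm x * l2norm y"
proof -
  have "cmod (l2inner x y) \<le> (\<Sum>n. cmod (x n) * cmod (y n))"
    unfolding l2inner_def
    by (rule norm_suminf_le[OF _ summable_norm_l2inner[OF assms]]) (simp add: norm_mult)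
  also have "\<dots> \<le> l2norm x * l2norm y"
  proof (rule suminf_le_const[OF summable_norm_l2inner[OF assms]])
    fix K
    have "(\<Sum>n<K. cmod (x n) * cmod (y n))
        \<le> L2_set (\<lambda>n. cmod (x n)) {..<K} * L2_set (\<lambda>n. cmod (y n)) {..<K}"
      using L2_set_mult_ineq[of "\<lambda>n. cmod (x n)" "\<lambda>n. cmod (y n)" "{..<K}"] by simp
    also have "\<dots> \<le> l2norm x * l2norm y"
    proof (rule mult_mono)
      show "L2_set (\<lambda>n. cmod (x n)) {..<K} \<le> l2norm x"
        unfolding L2_set_def
        by (rule real_le_lsqrt[OF l2norm_nonneg[OF assms(1)]]) (simp add: sum_le_l2norm_power2[OF assms(1)])
      show "L2_set (\<lambda>n. cmod (y n)) {..<K} \<le> l2norm y"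
        unfolding L2_set_def
        by (rule real_le_lsqrt[OF l2norm_nonneg[OF assms(2)]]) (simp add: sum_le_l2norm_power2[OF assms(2)])
    qed (simp_all add: L2_set_nonneg l2norm_nonneg[OF assms(1)])
    finally show "(\<Sum>n<K. cmod (x n) * cmod (y n)) \<le> l2norm x * l2norm y" .
  qed
  finally show ?thesis .
qed

lemma l2norm_add_power2:
  assumes "x \<in> ell2" "y \<in> ell2"
  shows "(l2norm (\<lambda>n. x n + y n))\<^sup>2 = (l2norm x)\<^sup>2 + (l2norm y)\<^sup>2 + 2 * Re (l2inner x y)"
proof -
  have "of_real ((l2norm (\<lambda>n. x n + y n))\<^sup>2) = l2inner (\<lambda>n. x n + y n) (\<lambda>n. x n + y n)"
    by (rule l2inner_self[symmetric, OF ell2_add[OF assms]])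
  also have "\<dots> = l2inner x x + l2inner x y + (l2inner y x + l2inner y y)"
    using assms by (simp add: ell2_add l2inner_add_left l2inner_add_right)
  finally show ?thesis
    using assms by (simp add: l2inner_self l2inner_commute[of x y] complex_eq_iff)
qed

lemma l2norm_mult: "x \<in> ell2 \<Longrightarrow> l2norm (\<lambda>n. a * x n) = cmod a * l2norm x"
  unfolding ell2_def l2norm_def
  by (simp add: norm_mult power_mult_distrib suminf_mult real_sqrt_mult)

lemma l2norm_diff_power2:
  assumes "x \<in> ell2" "y \<in> ell2"
  shows "(l2norm (\<lambda>n. x n - y n))\<^sup>2 = (l2norm x)\<^sup>2 + (l2norm y)\<^sup>2 - 2 * Re (l2inner x y)"
proof -
  have "l2inner x (\<lambda>n. -1 * y n) = - l2inner x y"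
    using l2inner_mult_right[OF assms, of "-1"] by simp
  then show ?thesis
    using l2norm_add_power2[OF assms(1) ell2_mult[OF assms(2)], of "-1"]
      l2norm_mult[OF assms(2), of "-1"] by simp
qed

lemma l2norm_parallelogram:
  assumes "x \<in> ell2" "y \<in> ell2"
  shows "(l2norm (\<lambda>n. x n - y n))\<^sup>2 = 2 * (l2norm x)\<^sup>2 + 2 * (l2norm y)\<^sup>2 - (l2norm (\<lambda>n. x n + y n))\<^sup>2"
  using l2norm_add_power2[OF assms] l2norm_diff_power2[OF assms] by simp

lemma l2norm_triangle:
  assumes "x \<in> ell2" "y \<in> ell2"
  shows "l2norm (\<lambda>n. x n + y n) \<le> l2norm x + l2norm y"
proof (rule power2_le_imp_le)
  have "Re (l2inner x y) \<le> l2norm x * l2norm y"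
    using l2inner_cauchy_schwarz[OF assms] complex_Re_le_cmod order_trans by blast
  then show "(l2norm (\<lambda>n. x n + y n))\<^sup>2 \<le> (l2norm x + l2norm y)\<^sup>2"
    by (simp add: l2norm_add_power2[OF assms] power2_sum)
  show "0 \<le> l2norm x + l2norm y"
    using l2norm_nonneg assms by (simp add: add_nonneg_nonneg)
qed

lemma l2norm_triangle_diff:
  assumes "x \<in> ell2" "y \<in> ell2"
  shows "l2norm (\<lambda>n. x n - y n) \<le> l2norm x + l2norm y"
  using l2norm_triangle[OF assms(1) ell2_mult[OF assms(2)], of "-1"] l2norm_mult[OF assms(2), of "-1"]
  by simp

lemma l2norm_eq_0_imp: "x \<in> ell2 \<Longrightarrow> l2norm x = 0 \<Longrightarrow> x = (\<lambda>n. 0)"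
  using norm_le_l2norm[of x] by (simp add: fun_eq_iff)

definition l2_tendsto :: "(nat \<Rightarrow> nat \<Rightarrow> complex) \<Rightarrow> (nat \<Rightarrow> complex) \<Rightarrow> bool" where
  "l2_tendsto a x \<longleftrightarrow> (\<lambda>j. l2norm (\<lambda>n. a j n - x n)) \<longlonglongrightarrow> 0"

definition l2_Cauchy :: "(nat \<Rightarrow> nat \<Rightarrow> complex) \<Rightarrow> bool" where
  "l2_Cauchy a \<longleftrightarrow> (\<forall>e>0. \<exists>M. \<forall>i\<ge>M. \<forall>j\<ge>M. l2norm (\<lambda>n. a i n - a j n) < e)"

lemma real_LIMSEQ_0_le:
  fixes u v :: "nat \<Rightarrow> real"
  assumes "\<And>j. u j \<le> v j" "v \<longlonglongrightarrow> 0" "\<And>j. 0 \<le> u j"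
  shows "u \<longlonglongrightarrow> 0"
  by (rule tendsto_sandwich[of "\<lambda>_. 0" u sequentially v]) (simp_all add: assms)

lemma l2_tendsto_const: "l2_tendsto (\<lambda>j. x) x"
  by (simp add: l2_tendsto_def)

lemma l2_tendsto_add:
  assumes "\<And>j. a j \<in> ell2" "\<And>j. b j \<in> ell2" "x \<in> ell2" "y \<in> ell2"
    and "l2_tendsto a x" "l2_tendsto b y"
  shows "l2_tendsto (\<lambda>j n. a j n + b j n) (\<lambda>n. x n + y n)"
proof -
  have "l2norm (\<lambda>n. a j n + b j n - (x n + y n))
      \<le> l2norm (\<lambda>n. a j n - x n) + l2norm (\<lambda>n. b j n - y n)" for j
  proof -
    have "(\<lambda>n. a j n + b j n - (x n + y n)) = (\<lambda>n. (a j n - x n) + (b j n - y n))"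
      by (simp add: algebra_simps)
    then show ?thesis
      using l2norm_triangle[OF ell2_diff[OF assms(1,3)] ell2_diff[OF assms(2,4)], of j j] by simp
  qed
  moreover have "(\<lambda>j. l2norm (\<lambda>n. a j n - x n) + l2norm (\<lambda>n. b j n - y n)) \<longlonglongrightarrow> 0"
    using tendsto_add[OF assms(5,6)[unfolded l2_tendsto_def]] by simp
  moreover have "0 \<le> l2norm (\<lambda>n. a j n + b j n - (x n + y n))" for j
    by (rule l2norm_nonneg[OF ell2_diff[OF ell2_add[OF assms(1,2)] ell2_add[OF assms(3,4)]]])
  ultimately show ?thesis
    unfolding l2_tendsto_def by (rule real_LIMSEQ_0_le)
qed

lemma l2_tendsto_mult:
  assumes "\<And>j. a j \<in> ell2" "x \<in> ell2" "l2_tendsto a x"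
  shows "l2_tendsto (\<lambda>j n. c * a j n) (\<lambda>n. c * x n)"
proof -
  have "l2norm (\<lambda>n. c * a j n - c * x n) = cmod c * l2norm (\<lambda>n. a j n - x n)" for j
    using l2norm_mult[OF ell2_diff[OF assms(1,2)], of c j] by (simp add: right_diff_distrib)
  then show ?thesis
    using tendsto_mult_left[OF assms(3)[unfolded l2_tendsto_def], of "cmod c"]
    by (simp add: l2_tendsto_def)
qed

lemma l2_tendsto_diff_mult:
  assumes "\<And>j. a j \<in> ell2" "\<And>j. b j \<in> ell2" "x \<in> ell2" "y \<in> ell2"
    and "l2_tendsto a x" "l2_tendsto b y"
  shows "l2_tendsto (\<lambda>j n. a j n - c * b j n) (\<lambda>n. x n - c * y n)"
  using l2_tendsto_add[OF assms(1) ell2_mult[OF assms(2)] assms(3) ell2_mult[OF assms(4)]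
      assms(5) l2_tendsto_mult[OF assms(2,4,6)], of "- c"]
  by simp

lemma l2_tendsto_l2norm:
  assumes "\<And>j. a j \<in> ell2" "x \<in> ell2" "l2_tendsto a x"
  shows "(\<lambda>j. l2norm (a j)) \<longlonglongrightarrow> l2norm x"
proof -
  have "norm (l2norm (a j) - l2norm x) \<le> l2norm (\<lambda>n. a j n - x n)" for j
    using l2norm_triangle[OF ell2_diff[OF assms(1,2)] assms(2), of j]
      l2norm_triangle_diff[OF assms(1) ell2_diff[OF assms(1,2)], of j j]
    by (simp add: abs_le_iff)
  then have "(\<lambda>j. l2norm (a j) - l2norm x) \<longlonglongrightarrow> 0"
    using assms(3) unfolding l2_tendsto_def by (rule Lim_null_comparison[OF always_eventually[OF allI]])
  then show ?thesis
    by (rule LIM_zero_cancel)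
qed

lemma l2_tendsto_l2inner:
  assumes "\<And>j. a j \<in> ell2" "\<And>j. b j \<in> ell2" "x \<in> ell2" "y \<in> ell2"
    and "l2_tendsto a x" "l2_tendsto b y"
  shows "(\<lambda>j. l2inner (a j) (b j)) \<longlonglongrightarrow> l2inner x y"
proof -
  define a' where "a' j = (\<lambda>n. a j n - x n)" for j
  define b' where "b' j = (\<lambda>n. b j n - y n)" for j
  have a': "a' j \<in> ell2" and b': "b' j \<in> ell2" for j
    unfolding a'_def b'_def by (rule ell2_diff[OF assms(1,3)], rule ell2_diff[OF assms(2,4)])
  have "l2inner (a j) (b j) - l2inner x y = l2inner (a' j) (b' j) + l2inner (a' j) y + l2inner x (b' j)" for j
  proof -
    have "l2inner (a' j) (b' j) = l2inner (a j) (b' j) - l2inner x (b' j)"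
      unfolding a'_def by (rule l2inner_diff_left[OF assms(1,3) b'])
    moreover have "l2inner (a j) (b' j) = l2inner (a j) (b j) - l2inner (a j) y"
      unfolding b'_def by (rule l2inner_diff_right[OF assms(1,2,4)])
    moreover have "l2inner (a' j) y = l2inner (a j) y - l2inner x y"
      unfolding a'_def by (rule l2inner_diff_left[OF assms(1,3,4)])
    ultimately show ?thesis
      by simp
  qed
  then have "norm (l2inner (a j) (b j) - l2inner x y)
      \<le> cmod (l2inner (a' j) (b' j)) + cmod (l2inner (a' j) y) + cmod (l2inner x (b' j))" for j
    by (simp only:) (intro norm_triangle_le add_right_mono norm_triangle_ineq)
  also have "\<dots> j \<le> l2norm (a' j) * l2norm (b' j) + l2norm (a' j) * l2norm y + l2norm x * l2norm (b' j)" for j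
    by (intro add_mono l2inner_cauchy_schwarz a' b' assms(3,4))
  finally have "norm (l2inner (a j) (b j) - l2inner x y)
      \<le> l2norm (a' j) * l2norm (b' j) + l2norm (a' j) * l2norm y + l2norm x * l2norm (b' j)" for j .
  moreover have "(\<lambda>j. l2norm (a' j) * l2norm (b' j) + l2norm (a' j) * l2norm y + l2norm x * l2norm (b' j))
      \<longlonglongrightarrow> 0 * 0 + 0 * l2norm y + l2norm x * 0"
    using assms(5,6) unfolding l2_tendsto_def a'_def b'_def by (intro tendsto_intros)
  then have "(\<lambda>j. l2norm (a' j) * l2norm (b' j) + l2norm (a' j) * l2norm y + l2norm x * l2norm (b' j))
      \<longlonglongrightarrow> 0"
    by simp
  ultimately have "(\<lambda>j. l2inner (a j) (b j) - l2inner x y) \<longlonglongrightarrow> 0"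
    by (rule Lim_null_comparison[OF always_eventually[OF allI]])
  then show ?thesis
    by (rule LIM_zero_cancel)
qed

lemma l2_tendsto_unique:
  assumes "\<And>j. a j \<in> ell2" "x \<in> ell2" "y \<in> ell2" "l2_tendsto a x" "l2_tendsto a y"
  shows "x = y"
proof -
  have "l2norm (\<lambda>n. x n - y n) \<le> l2norm (\<lambda>n. a j n - y n) + l2norm (\<lambda>n. a j n - x n)" for j
    using l2norm_triangle_diff[OF ell2_diff[OF assms(1,3)] ell2_diff[OF assms(1,2)], of j j]
    by simp
  then have "l2norm (\<lambda>n. x n - y n) \<le> 0 + 0"
    using tendsto_add[OF assms(5,4)[unfolded l2_tendsto_def]]
    by (intro LIMSEQ_le_const) auto
  then have "l2norm (\<lambda>n. x n - y n) = 0"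
    using l2norm_nonneg[OF ell2_diff[OF assms(2,3)]] by simp
  then show ?thesis
    using l2norm_eq_0_imp[OF ell2_diff[OF assms(2,3)]] by (simp add: fun_eq_iff)
qed

lemma l2_Cauchy_transfer:
  assumes "l2_Cauchy a" "0 < C" "\<And>i j. l2norm (\<lambda>n. b i n - b j n) \<le> C * l2norm (\<lambda>n. a i n - a j n)"
  shows "l2_Cauchy b"
  unfolding l2_Cauchy_def
proof (intro allI impI)
  fix e :: real
  assume "0 < e"
  then obtain M where M: "\<forall>i\<ge>M. \<forall>j\<ge>M. l2norm (\<lambda>n. a i n - a j n) < e / C"
    using assms(1,2) unfolding l2_Cauchy_def by (meson divide_pos_pos)
  have "l2norm (\<lambda>n. b i n - b j n) < e" if "M \<le> i" "M \<le> j" for i j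
  proof -
    have "C * l2norm (\<lambda>n. a i n - a j n) < C * (e / C)"
      using M that assms(2) by (intro mult_strict_left_mono) auto
    then show ?thesis
      using assms(2) assms(3)[of i j] by simp
  qed
  then show "\<exists>M. \<forall>i\<ge>M. \<forall>j\<ge>M. l2norm (\<lambda>n. b i n - b j n) < e"
    by blast
qed

lemma l2_Cauchy_imp_Cauchy_coordinate:
  assumes ell2: "\<And>j. a j \<in> ell2" and Cauchy: "l2_Cauchy a"
  shows "Cauchy (\<lambda>j. a j n)"
proof (rule metric_CauchyI)
  fix e :: real
  assume "0 < e"
  then obtain M where M: "\<forall>i\<ge>M. \<forall>j\<ge>M. l2norm (\<lambda>n. a i n - a j n) < e"
    using Cauchy unfolding l2_Cauchy_def by blast
  have "dist (a i n) (a j n) < e" if "M \<le> i" "M \<le> j" for i j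
    using order.strict_trans1[OF norm_le_l2norm[OF ell2_diff[OF ell2[of i] ell2[of j]], of n] M[rule_format, OF that]]
    by (simp add: dist_norm)
  then show "\<exists>M. \<forall>i\<ge>M. \<forall>j\<ge>M. dist (a i n) (a j n) < e"
    by blast
qed

lemma l2norm_le_pointwise_limit:
  assumes ell2: "\<And>i. b i \<in> ell2" and lim: "\<And>n. (\<lambda>i. b i n) \<longlonglongrightarrow> y n"
    and bound: "\<And>i. M \<le> i \<Longrightarrow> l2norm (b i) \<le> e"
  shows "y \<in> ell2" "l2norm y \<le> e"
proof -
  have "0 \<le> e"
    using bound[of M] l2norm_nonneg[OF ell2] by (meson order.trans order_refl)
  have partial: "(\<Sum>n<K. (cmod (y n))\<^sup>2) \<le> e\<^sup>2" for K
  proof (rule LIMSEQ_le_const2)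
    show "(\<lambda>i. \<Sum>n<K. (cmod (b i n))\<^sup>2) \<longlonglongrightarrow> (\<Sum>n<K. (cmod (y n))\<^sup>2)"
      by (intro tendsto_intros lim)
    have "(\<Sum>n<K. (cmod (b i n))\<^sup>2) \<le> e\<^sup>2" if "M \<le> i" for i
      using sum_le_l2norm_power2[OF ell2, of "{..<K}" i]
        power_mono[OF bound[OF that] l2norm_nonneg[OF ell2], of 2]
      by simp
    then show "\<exists>N. \<forall>i\<ge>N. (\<Sum>n<K. (cmod (b i n))\<^sup>2) \<le> e\<^sup>2"
      by blast
  qed
  have summable: "summable (\<lambda>n. (cmod (y n))\<^sup>2)"
    using partial by (intro summableI_nonneg_bounded) auto
  then show y: "y \<in> ell2"
    by (simp add: ell2_def)
  have "(l2norm y)\<^sup>2 \<le> e\<^sup>2"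
    unfolding l2norm_power2[OF y] by (rule suminf_le_const[OF summable partial])
  then show "l2norm y \<le> e"
    using power2_le_imp_le[OF _ \<open>0 \<le> e\<close>] by blast
qed

lemma ell2_complete:
  assumes ell2: "\<And>j. a j \<in> ell2" and Cauchy: "l2_Cauchy a"
  obtains x where "x \<in> ell2" "l2_tendsto a x"
proof -
  define x where "x n = lim (\<lambda>j. a j n)" for n
  have lim: "(\<lambda>j. a j n) \<longlonglongrightarrow> x n" for n
    using l2_Cauchy_imp_Cauchy_coordinate[OF ell2 Cauchy] unfolding x_def
    by (simp add: Cauchy_convergent_iff convergent_LIMSEQ_iff)
  have close: "(\<lambda>n. a j n - x n) \<in> ell2 \<and> l2norm (\<lambda>n. a j n - x n) \<le> e"
    if M: "\<forall>i\<ge>M. \<forall>j\<ge>M. l2norm (\<lambda>n. a i n - a j n) < e" and "M \<le> j" for M j e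
  proof -
    have "l2norm (\<lambda>n. a j n - a i n) \<le> e" if "M \<le> i" for i
      using M[rule_format, OF \<open>M \<le> j\<close> that] by simp
    then show ?thesis
      using l2norm_le_pointwise_limit[of "\<lambda>i n. a j n - a i n", OF ell2_diff[OF ell2 ell2]
          tendsto_diff[OF tendsto_const lim]]
      by blast
  qed
  obtain M where "\<forall>i\<ge>M. \<forall>j\<ge>M. l2norm (\<lambda>n. a i n - a j n) < 1"
    using Cauchy unfolding l2_Cauchy_def by (meson zero_less_one)
  then have "(\<lambda>n. a M n - x n) \<in> ell2"
    using close by blast
  then have "x \<in> ell2"
    using ell2_diff[OF ell2[of M]] by fastforce
  moreover have "l2_tendsto a x"
    unfolding l2_tendsto_def
  proof (rule LIMSEQ_I)
    fix r :: real
    assume "0 < r"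
    then obtain M where M: "\<forall>i\<ge>M. \<forall>j\<ge>M. l2norm (\<lambda>n. a i n - a j n) < r / 2"
      using Cauchy unfolding l2_Cauchy_def by (meson half_gt_zero)
    have "norm (l2norm (\<lambda>n. a j n - x n) - 0) < r" if "M \<le> j" for j
      using close[OF M that] l2norm_nonneg \<open>0 < r\<close> by simp
    then show "\<exists>M. \<forall>j\<ge>M. norm (l2norm (\<lambda>n. a j n - x n) - 0) < r"
      by blast
  qed
  ultimately show ?thesis
    using that by blast
qed

lemma ell2_norm_attains_max:
  assumes "x \<in> ell2"
  obtains n where "\<And>m. cmod (x m) \<le> cmod (x n)"
proof (cases "x = (\<lambda>n. 0)")
  case True
  then show ?thesis
    using that by simp
next
  case False
  then obtain m0 where m0: "0 < cmod (x m0)"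
    by (auto simp: fun_eq_iff)
  have "(\<lambda>n. (cmod (x n))\<^sup>2) \<longlonglongrightarrow> 0"
    using assms unfolding ell2_def by (intro summable_LIMSEQ_zero) simp
  then have "(\<lambda>n. sqrt ((cmod (x n))\<^sup>2)) \<longlonglongrightarrow> sqrt 0"
    by (rule tendsto_real_sqrt)
  then have "(\<lambda>n. cmod (x n)) \<longlonglongrightarrow> 0"
    by simp
  then have "eventually (\<lambda>m. cmod (x m) < cmod (x m0)) sequentially"
    using m0 by (rule order_tendstoD(2))
  then obtain M where M: "\<And>m. M \<le> m \<Longrightarrow> cmod (x m) < cmod (x m0)"
    by (auto simp: eventually_sequentially)
  have "Max ((\<lambda>m. cmod (x m)) ` {..M}) \<in> (\<lambda>m. cmod (x m)) ` {..M}"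
    by (rule Max_in) auto
  then obtain n where n_max: "Max ((\<lambda>m. cmod (x m)) ` {..M}) = cmod (x n)"
    by blast
  have "cmod (x m) \<le> cmod (x n)" if "m \<le> M" for m
    using that by (simp flip: n_max)
  moreover have "m0 \<le> M"
    using M[of m0] by (meson less_irrefl nat_le_linear)
  ultimately have "cmod (x m) \<le> cmod (x n)" for m
    using M[of m] by (meson less_imp_le not_le order.trans)
  then show ?thesis
    using that by blast
qed

section \<open>Finitely supported sequences and operators defined on them\<close>

lemma D0_iff_vanishing: "x \<in> D0 \<longleftrightarrow> (\<exists>S. \<forall>n\<ge>S. x n = 0)"
proof
  assume "x \<in> D0"
  then obtain S where "{n. x n \<noteq> 0} \<subseteq> {..<S}"
    unfolding D0_def using finite_nat_bounded by blast
  then show "\<exists>S. \<forall>n\<ge>S. x n = 0"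
    by (auto simp: subset_eq not_less[symmetric])
next
  assume "\<exists>S. \<forall>n\<ge>S. x n = 0"
  then obtain S where "{n. x n \<noteq> 0} \<subseteq> {..<S}"
    by (auto simp: not_less[symmetric])
  then show "x \<in> D0"
    unfolding D0_def using finite_subset by blast
qed

lemma D0_lincomb:
  assumes "x \<in> D0" "y \<in> D0"
  shows "(\<lambda>n. a * x n + b * y n) \<in> D0"
proof -
  have "{n. a * x n + b * y n \<noteq> 0} \<subseteq> {n. x n \<noteq> 0} \<union> {n. y n \<noteq> 0}"
    by auto
  then show ?thesis
    using assms unfolding D0_def by (auto intro: finite_subset)
qed

definition basis :: "nat \<Rightarrow> nat \<Rightarrow> complex" where
  "basis m = (\<lambda>n. if n = m then 1 else 0)"

lemma basis_D0: "basis m \<in> D0"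
  unfolding D0_def basis_def by simp

lemma l2inner_basis: "l2inner x (basis m) = cnj (x m)"
proof -
  have "(\<lambda>n. cnj (x n) * basis m n) = (\<lambda>n. if n = m then cnj (x n) else 0)"
    by (auto simp: basis_def)
  then show ?thesis
    unfolding l2inner_def using sums_single[of m "\<lambda>n. cnj (x n)"] by (simp add: sums_iff)
qed

lemma l2inner_vanishing:
  assumes "\<And>n. S \<le> n \<Longrightarrow> cnj (x n) * y n = 0"
  shows "l2inner x y = (\<Sum>n<S. cnj (x n) * y n)"
  unfolding l2inner_def by (rule suminf_finite) (use assms in auto)

lemma l2inner_commute_vanishing:
  assumes "\<And>n. S \<le> n \<Longrightarrow> y n = 0"
  shows "l2inner y x = cnj (l2inner x y)"
  using assms by (simp add: l2inner_vanishing[of S] mult.commute)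

lemma l2norm_power2_vanishing:
  assumes "\<And>n. S \<le> n \<Longrightarrow> x n = 0"
  shows "(l2norm x)\<^sup>2 = (\<Sum>n<S. (cmod (x n))\<^sup>2)"
proof -
  have "(\<Sum>n. (cmod (x n))\<^sup>2) = (\<Sum>n<S. (cmod (x n))\<^sup>2)"
    by (rule suminf_finite) (use assms in auto)
  then show ?thesis
    unfolding l2norm_def by (simp add: sum_nonneg)
qed

lemma graph_closure_D0_iff:
  "(x, y) \<in> graph_closure (graph_D0 T) \<longleftrightarrow>
     x \<in> ell2 \<and> y \<in> ell2 \<and> (\<exists>a. (\<forall>j. a j \<in> D0) \<and> l2_tendsto a x \<and> l2_tendsto (\<lambda>j. T (a j)) y)"
proof
  assume "(x, y) \<in> graph_closure (graph_D0 T)"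
  then obtain s where "x \<in> ell2" "y \<in> ell2" and s: "\<forall>j. s j \<in> graph_D0 T"
    and "l2_tendsto (\<lambda>j. fst (s j)) x" "l2_tendsto (\<lambda>j. snd (s j)) y"
    unfolding graph_closure_def l2_tendsto_def by auto
  moreover have "fst (s j) \<in> D0 \<and> snd (s j) = T (fst (s j))" for j
  proof -
    obtain u where "s j = (u, T u)" "u \<in> D0"
      using s unfolding graph_D0_def by blast
    then show ?thesis
      by simp
  qed
  ultimately show "x \<in> ell2 \<and> y \<in> ell2 \<and> (\<exists>a. (\<forall>j. a j \<in> D0) \<and> l2_tendsto a x \<and> l2_tendsto (\<lambda>j. T (a j)) y)"
    by (auto intro!: exI[of _ "\<lambda>j. fst (s j)"])
next
  assume "x \<in> ell2 \<and> y \<in> ell2 \<and> (\<exists>a. (\<forall>j. a j \<in> D0) \<and> l2_tendsto a x \<and> l2_tendsto (\<lambda>j. T (a j)) y)"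
  then obtain a where "x \<in> ell2" "y \<in> ell2" "\<forall>j. a j \<in> D0" "l2_tendsto a x" "l2_tendsto (\<lambda>j. T (a j)) y"
    by blast
  then show "(x, y) \<in> graph_closure (graph_D0 T)"
    unfolding graph_closure_def graph_D0_def l2_tendsto_def
    by (auto intro!: exI[of _ "\<lambda>j. (a j, T (a j))"])
qed

lemma graph_D0_subset_closure: "x \<in> D0 \<Longrightarrow> T x \<in> ell2 \<Longrightarrow> (x, T x) \<in> graph_closure (graph_D0 T)"
  using l2_tendsto_const[of x] l2_tendsto_const[of "T x"]
  by (auto simp: graph_closure_D0_iff D0_imp_ell2 intro!: exI[of _ "\<lambda>j. x"])

lemma graph_closure_symmetric:
  assumes T_ell2: "\<And>x. x \<in> D0 \<Longrightarrow> T x \<in> ell2"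
    and T_sym: "\<And>x y. x \<in> D0 \<Longrightarrow> y \<in> D0 \<Longrightarrow> l2inner x (T y) = l2inner (T x) y"
    and "(x, y) \<in> graph_closure (graph_D0 T)" "(x', y') \<in> graph_closure (graph_D0 T)"
  shows "l2inner x y' = l2inner y x'"
proof -
  obtain a where x: "x \<in> ell2" and y: "y \<in> ell2" and a: "\<And>j. a j \<in> D0"
    and ax: "l2_tendsto a x" and Tay: "l2_tendsto (\<lambda>j. T (a j)) y"
    using assms(3) by (auto simp: graph_closure_D0_iff)
  obtain b where x': "x' \<in> ell2" and y': "y' \<in> ell2" and b: "\<And>j. b j \<in> D0"
    and bx': "l2_tendsto b x'" and Tby': "l2_tendsto (\<lambda>j. T (b j)) y'"
    using assms(4) by (auto simp: graph_closure_D0_iff)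
  have "(\<lambda>j. l2inner (a j) (T (b j))) \<longlonglongrightarrow> l2inner x y'"
    by (rule l2_tendsto_l2inner[OF D0_imp_ell2[OF a] T_ell2[OF b] x y' ax Tby'])
  moreover have "(\<lambda>j. l2inner (T (a j)) (b j)) \<longlonglongrightarrow> l2inner y x'"
    by (rule l2_tendsto_l2inner[OF T_ell2[OF a] D0_imp_ell2[OF b] y x' Tay bx'])
  ultimately show ?thesis
    using T_sym[OF a b] LIMSEQ_unique by simp
qed

lemma graph_closure_subset_adjoint:
  assumes "\<And>x. x \<in> D0 \<Longrightarrow> T x \<in> ell2"
    and "\<And>x y. x \<in> D0 \<Longrightarrow> y \<in> D0 \<Longrightarrow> l2inner x (T y) = l2inner (T x) y"
  shows "graph_closure (graph_D0 T) \<subseteq> graph_adjoint (graph_closure (graph_D0 T))"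
  using graph_closure_symmetric[OF assms]
  by (auto simp: graph_adjoint_def graph_closure_D0_iff)

lemma l2norm_minimal_imp_orthogonal:
  assumes e: "e \<in> ell2" and q: "q \<in> ell2"
    and min: "\<And>s. (l2norm e)\<^sup>2 \<le> (l2norm (\<lambda>n. e n + s * q n))\<^sup>2"
  shows "l2inner e q = 0"
proof (rule ccontr)
  define a where "a = l2inner e q"
  assume "l2inner e q \<noteq> 0"
  then have a_pos: "0 < (cmod a)\<^sup>2"
    by (simp add: a_def)
  define r where "r = 1 / ((l2norm q)\<^sup>2 + 1)"
  have r_pos: "0 < r" and r_small: "r * (l2norm q)\<^sup>2 < 1"
    by (simp_all add: r_def add_pos_nonneg field_simps)
  define s where "s = - of_real r * cnj a"
  have "Re (s * a) = - r * (cmod a)\<^sup>2"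
  proof -
    have "cnj a * a = of_real ((cmod a)\<^sup>2)"
      by (metis complex_norm_square mult.commute)
    then show ?thesis
      by (simp add: s_def mult.assoc)
  qed
  moreover have "(cmod s)\<^sup>2 = r\<^sup>2 * (cmod a)\<^sup>2"
    using r_pos by (simp add: s_def norm_mult power_mult_distrib)
  ultimately have "(l2norm (\<lambda>n. e n + s * q n))\<^sup>2 = (l2norm e)\<^sup>2 + r * (cmod a)\<^sup>2 * (r * (l2norm q)\<^sup>2 - 2)"
    using l2norm_add_power2[OF e ell2_mult[OF q]] l2norm_mult[OF q, of s] l2inner_mult_right[OF e q, of s]
    by (simp add: a_def power_mult_distrib algebra_simps power2_eq_square)
  also have "\<dots> < (l2norm e)\<^sup>2"
    using r_pos a_pos r_small by (simp add: mult_pos_neg)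
  finally show False
    using min[of s] by linarith
qed

lemma minimising_sequence:
  fixes V :: "'a \<Rightarrow> real"
  assumes "A \<noteq> {}" "bdd_below (V ` A)"
  obtains xs where "\<And>j. xs j \<in> A" "\<And>j. V (xs j) < Inf (V ` A) + inverse (real (Suc j))"
proof -
  have "\<exists>x\<in>A. V x < Inf (V ` A) + inverse (real (Suc j))" for j
    using cInf_less_iff[of "V ` A" "Inf (V ` A) + inverse (real (Suc j))"] assms by simp
  then show ?thesis
    using that by metis
qed

text \<open>The parallelogram law makes a sequence that minimises the distance from \<open>z\<close> to a convex set
  a Cauchy sequence.\<close>

lemma l2_Cauchy_minimising:
  assumes a: "\<And>j. a j \<in> ell2" and z: "z \<in> ell2"
    and midpoint: "\<And>i j. 4 * \<delta> \<le> (l2norm (\<lambda>n. a i n + a j n - 2 * z n))\<^sup>2"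
    and minimising: "\<And>j. (l2norm (\<lambda>n. a j n - z n))\<^sup>2 < \<delta> + inverse (real (Suc j))"
  shows "l2_Cauchy a"
  unfolding l2_Cauchy_def
proof (intro allI impI)
  fix e :: real
  assume "0 < e"
  then obtain M where "0 < M" and M: "inverse (real M) < e\<^sup>2 / 4"
    using ex_inverse_of_nat_less[of "e\<^sup>2 / 4"] by auto
  have "l2norm (\<lambda>n. a i n - a j n) < e" if "M \<le> i" "M \<le> j" for i j
  proof (rule power_less_imp_less_base)
    have "(\<lambda>n. (a i n - z n) - (a j n - z n)) = (\<lambda>n. a i n - a j n)"
      "(\<lambda>n. (a i n - z n) + (a j n - z n)) = (\<lambda>n. a i n + a j n - 2 * z n)"
      by (simp_all add: algebra_simps)
    then have "(l2norm (\<lambda>n. a i n - a j n))\<^sup>2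
        = 2 * (l2norm (\<lambda>n. a i n - z n))\<^sup>2 + 2 * (l2norm (\<lambda>n. a j n - z n))\<^sup>2
          - (l2norm (\<lambda>n. a i n + a j n - 2 * z n))\<^sup>2"
      using l2norm_parallelogram[OF ell2_diff[OF a z] ell2_diff[OF a z], of i j] by simp
    moreover have "inverse (real (Suc i)) \<le> inverse (real M)" "inverse (real (Suc j)) \<le> inverse (real M)"
      using that \<open>0 < M\<close> by (simp_all add: le_imp_inverse_le)
    ultimately show "(l2norm (\<lambda>n. a i n - a j n))\<^sup>2 < e\<^sup>2"
      using midpoint[of i j] minimising[of i] minimising[of j] M by linarith
  qed (use \<open>0 < e\<close> in simp)
  then show "\<exists>M. \<forall>i\<ge>M. \<forall>j\<ge>M. l2norm (\<lambda>n. a i n - a j n) < e"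
    by blast
qed

lemma ell2_range_projection:
  assumes L_ell2: "\<And>x. x \<in> D0 \<Longrightarrow> L x \<in> ell2"
    and L_lincomb: "\<And>a b x y. L (\<lambda>n. a * x n + b * y n) = (\<lambda>n. a * L x n + b * L y n)"
    and z: "z \<in> ell2"
  obtains xs p where "\<And>j. xs j \<in> D0" "l2_Cauchy (\<lambda>j. L (xs j))" "p \<in> ell2"
    "l2_tendsto (\<lambda>j. L (xs j)) p" "\<And>y. y \<in> D0 \<Longrightarrow> l2inner (\<lambda>n. p n - z n) (L y) = 0"
proof -
  define V where "V x = (l2norm (\<lambda>n. L x n - z n))\<^sup>2" for x
  define \<delta> where "\<delta> = Inf (V ` D0)"
  have bdd: "bdd_below (V ` D0)"
    by (rule bdd_belowI[of _ 0]) (auto simp: V_def)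
  have \<delta>_le: "\<delta> \<le> V x" if "x \<in> D0" for x
    unfolding \<delta>_def by (rule cInf_lower[OF imageI[OF that] bdd])
  obtain xs where xs: "\<And>j. xs j \<in> D0" and V_xs: "\<And>j. V (xs j) < \<delta> + inverse (real (Suc j))"
    using minimising_sequence[OF _ bdd] basis_D0 unfolding \<delta>_def by blast
  have Lxs: "L (xs j) \<in> ell2" for j
    by (rule L_ell2[OF xs])
  have "4 * \<delta> \<le> (l2norm (\<lambda>n. L (xs i) n + L (xs j) n - 2 * z n))\<^sup>2" for i j
  proof -
    define m where "m = (\<lambda>n. (1/2) * xs i n + (1/2) * xs j n)"
    have "L m = (\<lambda>n. (1/2) * L (xs i) n + (1/2) * L (xs j) n)"
      unfolding m_def by (rule L_lincomb)
    then have "(\<lambda>n. L (xs i) n + L (xs j) n - 2 * z n) = (\<lambda>n. 2 * (L m n - z n))"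
      by (simp add: algebra_simps)
    moreover have "m \<in> D0"
      unfolding m_def by (rule D0_lincomb[OF xs xs])
    ultimately show ?thesis
      using \<delta>_le l2norm_mult[OF ell2_diff[OF L_ell2 z], of m 2] by (simp add: V_def power_mult_distrib)
  qed
  then have Cauchy: "l2_Cauchy (\<lambda>j. L (xs j))"
    using V_xs unfolding V_def by (rule l2_Cauchy_minimising[of "\<lambda>j. L (xs j)", OF Lxs z])
  obtain p where p: "p \<in> ell2" and Lxs_p: "l2_tendsto (\<lambda>j. L (xs j)) p"
    using ell2_complete[OF Lxs Cauchy] by blast
  have V_lim: "(\<lambda>j. (l2norm (\<lambda>n. L (xs j) n + w n - z n))\<^sup>2) \<longlonglongrightarrow> (l2norm (\<lambda>n. p n + w n - z n))\<^sup>2"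
    if w: "w \<in> ell2" for w
  proof -
    have "l2_tendsto (\<lambda>j n. L (xs j) n + w n - z n) (\<lambda>n. p n + w n - z n)"
      using Lxs_p by (simp add: l2_tendsto_def)
    then show ?thesis
      by (intro tendsto_power l2_tendsto_l2norm ell2_diff[OF ell2_add[OF Lxs w] z] ell2_diff[OF ell2_add[OF p w] z])
  qed
  have upper: "(l2norm (\<lambda>n. p n - z n))\<^sup>2 \<le> \<delta>"
    using V_lim[of "\<lambda>n. 0"] LIMSEQ_inverse_real_of_nat_add[of \<delta>] V_xs
    by (intro LIMSEQ_le[where X = "\<lambda>j. V (xs j)"]) (auto simp: V_def ell2_def less_imp_le)
  have lower: "\<delta> \<le> (l2norm (\<lambda>n. p n + s * L y n - z n))\<^sup>2" if y: "y \<in> D0" for y s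
  proof (rule LIMSEQ_le_const[OF V_lim[OF ell2_mult[OF L_ell2[OF y]]]])
    have "L (\<lambda>n. 1 * xs j n + s * y n) = (\<lambda>n. 1 * L (xs j) n + s * L y n)" for j
      by (rule L_lincomb)
    then show "\<exists>N. \<forall>j\<ge>N. \<delta> \<le> (l2norm (\<lambda>n. L (xs j) n + s * L y n - z n))\<^sup>2"
      using \<delta>_le[OF D0_lincomb[OF xs y, where a = 1 and b = s]] by (simp add: V_def)
  qed
  have "l2inner (\<lambda>n. p n - z n) (L y) = 0" if y: "y \<in> D0" for y
  proof (rule l2norm_minimal_imp_orthogonal[OF ell2_diff[OF p z] L_ell2[OF y]])
    fix s
    have "(\<lambda>n. p n - z n + s * L y n) = (\<lambda>n. p n + s * L y n - z n)"
      by (simp add: algebra_simps)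
    then show "(l2norm (\<lambda>n. p n - z n))\<^sup>2 \<le> (l2norm (\<lambda>n. p n - z n + s * L y n))\<^sup>2"
      using upper lower[OF y, of s] by simp
  qed
  then show ?thesis
    using that[OF xs Cauchy p Lxs_p] by blast
qed

section \<open>Hermitian band matrices\<close>

definition band_op :: "nat \<Rightarrow> (nat \<Rightarrow> real) \<Rightarrow> complex \<Rightarrow> (nat \<Rightarrow> real) \<Rightarrow> (nat \<Rightarrow> complex) \<Rightarrow> nat \<Rightarrow> complex" where
  "band_op d c \<xi> f x n = of_real (f n) * x n
     + (if d \<le> n then \<xi> * of_real (c (n - d)) * x (n - d) else 0)
     + cnj \<xi> * of_real (c n) * x (n + d)"

definition offdiag_row_sum :: "nat \<Rightarrow> (nat \<Rightarrow> real) \<Rightarrow> nat \<Rightarrow> real" where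
  "offdiag_row_sum d c n = (if d \<le> n then c (n - d) else 0) + c n"

lemma band_op_lincomb:
  "band_op d c \<xi> f (\<lambda>n. a * x n + b * y n) = (\<lambda>n. a * band_op d c \<xi> f x n + b * band_op d c \<xi> f y n)"
  by (rule ext) (simp add: band_op_def algebra_simps)

lemma band_op_D0:
  assumes "x \<in> D0"
  shows "band_op d c \<xi> f x \<in> D0"
proof -
  obtain S where "\<forall>n\<ge>S. x n = 0"
    using assms by (auto simp: D0_iff_vanishing)
  then have "\<forall>n\<ge>S + d. band_op d c \<xi> f x n = 0"
    by (simp add: band_op_def)
  then show ?thesis
    by (auto simp: D0_iff_vanishing)
qed

lemma band_op_D0_ell2: "x \<in> D0 \<Longrightarrow> band_op d c \<xi> f x \<in> ell2"
  by (rule D0_imp_ell2[OF band_op_D0])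

lemma sum_lessThan_add_vanishing:
  fixes S d :: nat
  assumes "\<And>n. S \<le> n \<Longrightarrow> g n = 0"
  shows "(\<Sum>n<S + d. g n) = (\<Sum>n<S. g n)"
  using assms by (induction d) auto

lemma sum_shift_index:
  fixes S d :: nat
  shows "(\<Sum>n<S + d. if d \<le> n then h (n - d) else 0) = (\<Sum>m<S. h m)"
  by (induction S) (simp_all add: add.commute)

lemma sum_shift_index_vanishing:
  fixes S d :: nat
  assumes "\<And>m. S \<le> m + d \<Longrightarrow> h m = 0"
  shows "(\<Sum>n<S. if d \<le> n then h (n - d) else 0) = (\<Sum>m<S. h m)"
proof -
  have "(\<Sum>n<S. if d \<le> n then h (n - d) else 0) = (\<Sum>n<S + d. if d \<le> n then h (n - d) else 0)"
    by (rule sum_lessThan_add_vanishing[symmetric]) (simp add: assms)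
  also have "\<dots> = (\<Sum>m<S. h m)"
    by (rule sum_shift_index)
  finally show ?thesis .
qed

definition band_form ::
    "nat \<Rightarrow> (nat \<Rightarrow> real) \<Rightarrow> complex \<Rightarrow> (nat \<Rightarrow> real) \<Rightarrow> nat \<Rightarrow> (nat \<Rightarrow> complex) \<Rightarrow> (nat \<Rightarrow> complex) \<Rightarrow> complex" where
  "band_form d c \<xi> f S x y = (\<Sum>n<S. of_real (f n) * cnj (x n) * y n
      + \<xi> * of_real (c n) * cnj (x (n + d)) * y n + cnj \<xi> * of_real (c n) * cnj (x n) * y (n + d))"

lemma cnj_band_form: "cnj (band_form d c \<xi> f S x y) = band_form d c \<xi> f S y x"
  unfolding band_form_def by (simp add: ac_simps)

lemma l2inner_band_op_eq_band_form:
  assumes "(\<forall>n\<ge>S. x n = 0) \<or> (\<forall>n\<ge>S. y n = 0)"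
  shows "l2inner x (band_op d c \<xi> f y) = band_form d c \<xi> f S x y"
proof -
  define D where "D n = of_real (f n) * cnj (x n) * y n" for n
  define P where "P n = \<xi> * of_real (c n) * cnj (x (n + d)) * y n" for n
  define Q where "Q n = cnj \<xi> * of_real (c n) * cnj (x n) * y (n + d)" for n
  have pointwise: "cnj (x n) * band_op d c \<xi> f y n = D n + (if d \<le> n then P (n - d) else 0) + Q n" for n
    by (cases "d \<le> n") (simp_all add: band_op_def D_def P_def Q_def algebra_simps)
  have form: "band_form d c \<xi> f S x y = (\<Sum>n<S. D n) + (\<Sum>n<S. P n) + (\<Sum>n<S. Q n)"
    unfolding band_form_def D_def P_def Q_def by (simp add: sum.distrib)
  show ?thesis
    using assms
  proof
    assume x: "\<forall>n\<ge>S. x n = 0"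
    have "l2inner x (band_op d c \<xi> f y) = (\<Sum>n<S. cnj (x n) * band_op d c \<xi> f y n)"
      by (rule l2inner_vanishing) (simp add: x)
    also have "\<dots> = (\<Sum>n<S. D n) + (\<Sum>n<S. if d \<le> n then P (n - d) else 0) + (\<Sum>n<S. Q n)"
      by (simp add: pointwise sum.distrib)
    also have "(\<Sum>n<S. if d \<le> n then P (n - d) else 0) = (\<Sum>n<S. P n)"
      by (rule sum_shift_index_vanishing) (simp add: P_def x)
    finally show ?thesis
      by (simp add: form)
  next
    assume y: "\<forall>n\<ge>S. y n = 0"
    have "l2inner x (band_op d c \<xi> f y) = (\<Sum>n<S + d. cnj (x n) * band_op d c \<xi> f y n)"
      by (rule l2inner_vanishing) (simp add: band_op_def y)
    also have "\<dots> = (\<Sum>n<S + d. D n) + (\<Sum>n<S + d. if d \<le> n then P (n - d) else 0) + (\<Sum>n<S + d. Q n)"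
      by (simp add: pointwise sum.distrib)
    also have "(\<Sum>n<S + d. D n) = (\<Sum>n<S. D n)"
      by (rule sum_lessThan_add_vanishing) (simp add: D_def y)
    also have "(\<Sum>n<S + d. Q n) = (\<Sum>n<S. Q n)"
      by (rule sum_lessThan_add_vanishing) (simp add: Q_def y)
    also have "(\<Sum>n<S + d. if d \<le> n then P (n - d) else 0) = (\<Sum>n<S. P n)"
      by (rule sum_shift_index)
    finally show ?thesis
      by (simp add: form)
  qed
qed

lemma l2inner_band_op_symmetric:
  assumes "y \<in> D0"
  shows "l2inner x (band_op d c \<xi> f y) = l2inner (band_op d c \<xi> f x) y"
proof -
  obtain S where S: "\<forall>n\<ge>S. y n = 0"
    using assms by (auto simp: D0_iff_vanishing)
  have "l2inner x (band_op d c \<xi> f y) = band_form d c \<xi> f S x y"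
    using S by (simp add: l2inner_band_op_eq_band_form)
  also have "\<dots> = cnj (band_form d c \<xi> f S y x)"
    by (simp add: cnj_band_form)
  also have "band_form d c \<xi> f S y x = l2inner y (band_op d c \<xi> f x)"
    using S by (simp add: l2inner_band_op_eq_band_form[of S y])
  also have "cnj \<dots> = l2inner (band_op d c \<xi> f x) y"
    using S by (simp add: l2inner_commute_vanishing[of S y])
  finally show ?thesis .
qed

lemma l2inner_band_op_basis: "l2inner x (band_op d c \<xi> f (basis m)) = cnj (band_op d c \<xi> f x m)"
  by (simp add: l2inner_band_op_symmetric[OF basis_D0] l2inner_basis)

lemma Im_l2inner_band_op:
  assumes "x \<in> D0"
  shows "Im (l2inner x (band_op d c \<xi> f x)) = 0"
proof -
  obtain S where S: "\<forall>n\<ge>S. x n = 0"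
    using assms by (auto simp: D0_iff_vanishing)
  have "l2inner x (band_op d c \<xi> f x) = l2inner (band_op d c \<xi> f x) x"
    by (rule l2inner_band_op_symmetric[OF assms])
  also have "\<dots> = cnj (l2inner x (band_op d c \<xi> f x))"
    using S by (simp add: l2inner_commute_vanishing[of S x])
  finally show ?thesis
    by (metis Reals_cnj_iff complex_is_Real_iff)
qed

lemma l2norm_band_op_minus_imag:
  assumes "x \<in> D0"
  shows "(l2norm (\<lambda>n. band_op d c \<xi> f x n - \<i> * of_real t * x n))\<^sup>2
    = (l2norm (band_op d c \<xi> f x))\<^sup>2 + t\<^sup>2 * (l2norm x)\<^sup>2"
proof -
  have x: "x \<in> ell2" and Jx: "band_op d c \<xi> f x \<in> ell2"
    using assms by (simp_all add: D0_imp_ell2 band_op_D0_ell2)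
  have "l2inner (band_op d c \<xi> f x) (\<lambda>n. \<i> * of_real t * x n)
      = \<i> * of_real t * l2inner x (band_op d c \<xi> f x)"
    by (simp add: l2inner_mult_right[OF Jx x] l2inner_band_op_symmetric[OF assms])
  then have "Re (l2inner (band_op d c \<xi> f x) (\<lambda>n. \<i> * of_real t * x n)) = 0"
    using Im_l2inner_band_op[OF assms] by simp
  then show ?thesis
    using l2norm_diff_power2[OF Jx ell2_mult[OF x]] l2norm_mult[OF x, of "\<i> * of_real t"]
    by (simp add: norm_mult power_mult_distrib)
qed

lemma Re_band_form_self:
  "Re (band_form d c \<xi> f S x x)
    = (\<Sum>n<S. f n * (cmod (x n))\<^sup>2 + 2 * Re (cnj \<xi> * of_real (c n) * cnj (x n) * x (n + d)))"
proof -
  define Q where "Q n = cnj \<xi> * of_real (c n) * cnj (x n) * x (n + d)" for n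
  have "cnj (x n) * x n = of_real ((cmod (x n))\<^sup>2)" for n
    by (metis complex_norm_square mult.commute)
  then have diagonal: "of_real (f n) * cnj (x n) * x n = of_real (f n * (cmod (x n))\<^sup>2)" for n
    by (simp only: mult.assoc of_real_mult)
  have lower: "\<xi> * of_real (c n) * cnj (x (n + d)) * x n = cnj (Q n)" for n
    by (simp add: Q_def ac_simps)
  have "band_form d c \<xi> f S x x = (\<Sum>n<S. of_real (f n * (cmod (x n))\<^sup>2) + (cnj (Q n) + Q n))"
    unfolding band_form_def by (simp only: diagonal lower Q_def[symmetric] add.assoc)
  moreover have "Re (of_real r + (cnj q + q)) = r + 2 * Re q" for r q
    by simp
  ultimately show ?thesis
    unfolding Q_def[symmetric] by (simp only: Re_sum)
qed

lemma Re_l2inner_band_op_ge: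
  assumes c: "\<And>n. 0 \<le> c n" and S: "\<forall>n\<ge>S. x n = 0"
  shows "(\<Sum>n<S. (f n - cmod \<xi> * offdiag_row_sum d c n) * (cmod (x n))\<^sup>2)
    \<le> Re (l2inner x (band_op d c \<xi> f x))"
proof -
  define a where "a n = cmod (x n)" for n
  define Q where "Q n = cnj \<xi> * of_real (c n) * cnj (x n) * x (n + d)" for n
  have "Re (l2inner x (band_op d c \<xi> f x)) = (\<Sum>n<S. f n * (a n)\<^sup>2 + 2 * Re (Q n))"
    using S by (simp add: l2inner_band_op_eq_band_form Re_band_form_self a_def Q_def)
  also have "\<dots> \<ge> (\<Sum>n<S. f n * (a n)\<^sup>2 - cmod \<xi> * c n * ((a n)\<^sup>2 + (a (n + d))\<^sup>2))"
  proof (rule sum_mono)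
    fix n
    have "2 * cmod (Q n) = cmod \<xi> * c n * (2 * (a n * a (n + d)))"
      using c[of n] by (simp add: Q_def a_def norm_mult)
    also have "\<dots> \<le> cmod \<xi> * c n * ((a n)\<^sup>2 + (a (n + d))\<^sup>2)"
      using sum_squares_bound[of "a n" "a (n + d)"] c[of n] by (intro mult_left_mono) simp_all
    finally have "2 * cmod (Q n) \<le> cmod \<xi> * c n * ((a n)\<^sup>2 + (a (n + d))\<^sup>2)" .
    then show "f n * (a n)\<^sup>2 - cmod \<xi> * c n * ((a n)\<^sup>2 + (a (n + d))\<^sup>2) \<le> f n * (a n)\<^sup>2 + 2 * Re (Q n)"
      using abs_Re_le_cmod[of "Q n"] by linarith
  qed
  also have "(\<Sum>n<S. f n * (a n)\<^sup>2 - cmod \<xi> * c n * ((a n)\<^sup>2 + (a (n + d))\<^sup>2))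
      = (\<Sum>n<S. f n * (a n)\<^sup>2 - cmod \<xi> * c n * (a n)\<^sup>2) - cmod \<xi> * (\<Sum>n<S. c n * (a (n + d))\<^sup>2)"
    by (simp add: algebra_simps sum_subtractf sum_distrib_left sum.distrib)
  also have "(\<Sum>n<S. c n * (a (n + d))\<^sup>2) = (\<Sum>n<S. if d \<le> n then c (n - d) * (a n)\<^sup>2 else 0)"
    using sum_shift_index_vanishing[of S d "\<lambda>m. c m * (a (m + d))\<^sup>2"] S
    by (simp add: a_def if_distrib cong: if_cong)
  also have "(\<Sum>n<S. f n * (a n)\<^sup>2 - cmod \<xi> * c n * (a n)\<^sup>2)
      - cmod \<xi> * (\<Sum>n<S. if d \<le> n then c (n - d) * (a n)\<^sup>2 else 0)
      = (\<Sum>n<S. (f n - cmod \<xi> * offdiag_row_sum d c n) * (a n)\<^sup>2)"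
  proof -
    have "(f n - cmod \<xi> * offdiag_row_sum d c n) * (a n)\<^sup>2
        = f n * (a n)\<^sup>2 - cmod \<xi> * c n * (a n)\<^sup>2 - cmod \<xi> * (if d \<le> n then c (n - d) * (a n)\<^sup>2 else 0)" for n
      by (cases "d \<le> n") (simp_all add: offdiag_row_sum_def algebra_simps)
    then show ?thesis
      by (simp add: sum_subtractf sum_distrib_left)
  qed
  finally show ?thesis
    by (simp add: a_def)
qed

text \<open>A maximum principle: at a coefficient of maximal modulus, diagonal dominance leaves no room
  for the eigenvalue equation.\<close>

lemma band_op_eigenvector_eq_0:
  assumes x: "x \<in> ell2" and eigen: "band_op d c \<xi> f x = (\<lambda>n. \<mu> * x n)" and c: "\<And>n. 0 \<le> c n"
    and dominant: "\<And>n. cmod \<xi> * offdiag_row_sum d c n < cmod (of_real (f n) - \<mu>)"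
  shows "x = (\<lambda>n. 0)"
proof -
  obtain n where max: "\<And>m. cmod (x m) \<le> cmod (x n)"
    using ell2_norm_attains_max[OF x] by blast
  define lower where "lower = (if d \<le> n then \<xi> * of_real (c (n - d)) * x (n - d) else 0)"
  define upper where "upper = cnj \<xi> * of_real (c n) * x (n + d)"
  have "(of_real (f n) - \<mu>) * x n = - (lower + upper)"
    using fun_cong[OF eigen, of n] by (simp add: band_op_def lower_def upper_def algebra_simps)
  then have "cmod (of_real (f n) - \<mu>) * cmod (x n) = cmod (lower + upper)"
    by (metis norm_minus_cancel norm_mult)
  also have "\<dots> \<le> cmod lower + cmod upper"
    by (rule norm_triangle_ineq)
  also have "cmod lower \<le> cmod \<xi> * (if d \<le> n then c (n - d) else 0) * cmod (x n)"
    using c max by (simp add: lower_def norm_mult mult_left_mono)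
  also have "cmod upper \<le> cmod \<xi> * c n * cmod (x n)"
    using c max by (simp add: upper_def norm_mult mult_left_mono)
  finally have "cmod (of_real (f n) - \<mu>) * cmod (x n) \<le> cmod \<xi> * offdiag_row_sum d c n * cmod (x n)"
    by (simp add: offdiag_row_sum_def algebra_simps)
  then have "cmod (x n) = 0"
    using mult_strict_right_mono[OF dominant[of n], of "cmod (x n)"] by fastforce
  then show ?thesis
    using max by (simp add: fun_eq_iff)
qed

lemma graph_adjoint_band_op:
  assumes "(u, v) \<in> graph_adjoint (graph_closure (graph_D0 (band_op d c \<xi> f)))"
  shows "v = band_op d c \<xi> f u"
proof
  fix m
  have "(basis m, band_op d c \<xi> f (basis m)) \<in> graph_closure (graph_D0 (band_op d c \<xi> f))"
    by (rule graph_D0_subset_closure[where T = "band_op d c \<xi> f", OF basis_D0 band_op_D0_ell2[OF basis_D0]])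
  then have "l2inner u (band_op d c \<xi> f (basis m)) = l2inner v (basis m)"
    using assms unfolding graph_adjoint_def by fastforce
  then show "v m = band_op d c \<xi> f u m"
    by (simp add: l2inner_band_op_basis l2inner_basis)
qed

lemma band_op_closure_subset_adjoint:
  "graph_closure (graph_D0 (band_op d c \<xi> f)) \<subseteq> graph_adjoint (graph_closure (graph_D0 (band_op d c \<xi> f)))"
  by (rule graph_closure_subset_adjoint) (simp_all add: band_op_D0_ell2 l2inner_band_op_symmetric)

lemma l2norm_le_band_op_minus_imag:
  assumes "x \<in> D0" "0 \<le> t"
  shows "t * l2norm x \<le> l2norm (\<lambda>n. band_op d c \<xi> f x n - \<i> * of_real t * x n)"
    and "l2norm (band_op d c \<xi> f x) \<le> l2norm (\<lambda>n. band_op d c \<xi> f x n - \<i> * of_real t * x n)"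
proof -
  let ?Lx = "\<lambda>n. band_op d c \<xi> f x n - \<i> * of_real t * x n"
  have "(l2norm ?Lx)\<^sup>2 = (l2norm (band_op d c \<xi> f x))\<^sup>2 + (t * l2norm x)\<^sup>2"
    using l2norm_band_op_minus_imag[OF assms(1)] by (simp add: power_mult_distrib)
  then have "(t * l2norm x)\<^sup>2 \<le> (l2norm ?Lx)\<^sup>2" "(l2norm (band_op d c \<xi> f x))\<^sup>2 \<le> (l2norm ?Lx)\<^sup>2"
    by simp_all
  moreover have "0 \<le> l2norm ?Lx"
    by (rule l2norm_nonneg[OF ell2_diff[OF band_op_D0_ell2[OF assms(1)] ell2_mult[OF D0_imp_ell2[OF assms(1)]]]])
  ultimately show "t * l2norm x \<le> l2norm ?Lx" "l2norm (band_op d c \<xi> f x) \<le> l2norm ?Lx"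
    using power2_le_imp_le by blast+
qed

text \<open>The estimate above makes the graph norm of \<open>band_op\<close> on \<open>D0\<close> equivalent to
  \<open>x \<mapsto> l2norm (band_op x - i t x)\<close>, so Cauchy sequences for the latter converge in the graph.\<close>

lemma band_op_minus_imag_Cauchy_limit:
  assumes t: "0 < t" and xs: "\<And>j. xs j \<in> D0"
    and Cauchy: "l2_Cauchy (\<lambda>j n. band_op d c \<xi> f (xs j) n - \<i> * of_real t * xs j n)"
  obtains w y where "(w, y) \<in> graph_closure (graph_D0 (band_op d c \<xi> f))"
    "l2_tendsto (\<lambda>j n. band_op d c \<xi> f (xs j) n - \<i> * of_real t * xs j n) (\<lambda>n. y n - \<i> * of_real t * w n)"
proof -
  let ?J = "band_op d c \<xi> f"
  let ?L = "\<lambda>x n. ?J x n - \<i> * of_real t * x n"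
  have xs_diff: "(\<lambda>n. xs i n - xs j n) \<in> D0"
    and J_diff: "?J (\<lambda>n. xs i n - xs j n) = (\<lambda>n. ?J (xs i) n - ?J (xs j) n)" for i j
    using D0_lincomb[OF xs xs, of 1 i "-1" j] band_op_lincomb[of d c \<xi> f 1 "xs i" "-1" "xs j"]
    by simp_all
  have L_diff: "(\<lambda>n. ?J (xs i) n - ?J (xs j) n - \<i> * of_real t * (xs i n - xs j n))
      = (\<lambda>n. ?L (xs i) n - ?L (xs j) n)" for i j
    by (simp add: algebra_simps)
  have bounds: "t * l2norm (\<lambda>n. xs i n - xs j n) \<le> l2norm (\<lambda>n. ?L (xs i) n - ?L (xs j) n)"
    "l2norm (\<lambda>n. ?J (xs i) n - ?J (xs j) n) \<le> l2norm (\<lambda>n. ?L (xs i) n - ?L (xs j) n)" for i j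
    using l2norm_le_band_op_minus_imag[OF xs_diff[of i j] less_imp_le[OF t], of d c \<xi> f]
    by (simp_all only: L_diff J_diff)
  have "l2_Cauchy xs"
  proof (rule l2_Cauchy_transfer[OF Cauchy])
    show "l2norm (\<lambda>n. xs i n - xs j n) \<le> inverse t * l2norm (\<lambda>n. ?L (xs i) n - ?L (xs j) n)" for i j
      using bounds(1)[of i j] t by (simp add: field_simps)
  qed (use t in simp)
  then obtain w where w: "w \<in> ell2" "l2_tendsto xs w"
    using ell2_complete[of xs, OF D0_imp_ell2[OF xs]] by blast
  have "l2_Cauchy (\<lambda>j. ?J (xs j))"
  proof (rule l2_Cauchy_transfer[OF Cauchy])
    show "l2norm (\<lambda>n. ?J (xs i) n - ?J (xs j) n) \<le> 1 * l2norm (\<lambda>n. ?L (xs i) n - ?L (xs j) n)" for i j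
      using bounds(2)[of i j] by simp
  qed simp
  then obtain y where y: "y \<in> ell2" "l2_tendsto (\<lambda>j. ?J (xs j)) y"
    using ell2_complete[of "\<lambda>j. ?J (xs j)", OF band_op_D0_ell2[OF xs]] by blast
  have "(w, y) \<in> graph_closure (graph_D0 ?J)"
    using xs w y by (auto simp: graph_closure_D0_iff)
  moreover have "l2_tendsto (\<lambda>j. ?L (xs j)) (\<lambda>n. y n - \<i> * of_real t * w n)"
    by (rule l2_tendsto_diff_mult[OF band_op_D0_ell2[OF xs] D0_imp_ell2[OF xs] y(1) w(1) y(2) w(2)])
  ultimately show ?thesis
    using that by blast
qed

lemma band_op_orthogonal_to_range:
  assumes e: "e \<in> ell2"
    and orth: "\<And>m. l2inner e (\<lambda>n. band_op d c \<xi> f (basis m) n - \<i> * of_real t * basis m n) = 0"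
  shows "band_op d c \<xi> f e = (\<lambda>n. \<i> * of_real (- t) * e n)"
proof
  fix m
  have "l2inner e (\<lambda>n. band_op d c \<xi> f (basis m) n - \<i> * of_real t * basis m n)
      = cnj (band_op d c \<xi> f e m) - \<i> * of_real t * cnj (e m)"
    using l2inner_diff_right[OF e band_op_D0_ell2[OF basis_D0] ell2_mult[OF D0_imp_ell2[OF basis_D0]]]
      l2inner_mult_right[OF e D0_imp_ell2[OF basis_D0]]
    by (simp add: l2inner_band_op_basis l2inner_basis)
  then have "cnj (cnj (band_op d c \<xi> f e m)) = cnj (\<i> * of_real t * cnj (e m))"
    using orth[of m] by simp
  then show "band_op d c \<xi> f e m = \<i> * of_real (- t) * e m"
    by simp
qed

context
  fixes d :: nat and c f :: "nat \<Rightarrow> real" and \<xi> :: complex and t :: real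
  assumes c_nonneg: "\<And>n. 0 \<le> c n" and t_pos: "0 < t"
    and diagonal_dominance: "\<And>n. cmod \<xi> * offdiag_row_sum d c n < sqrt ((f n)\<^sup>2 + t\<^sup>2)"
begin

lemma band_op_imag_eigenvector_eq_0:
  assumes "x \<in> ell2" "band_op d c \<xi> f x = (\<lambda>n. \<i> * of_real s * x n)" "\<bar>s\<bar> = t"
  shows "x = (\<lambda>n. 0)"
proof (rule band_op_eigenvector_eq_0[OF assms(1,2) c_nonneg])
  fix n
  have "s\<^sup>2 = t\<^sup>2"
    using assms(3) by (metis power2_abs)
  then have "cmod (of_real (f n) - \<i> * of_real s) = sqrt ((f n)\<^sup>2 + t\<^sup>2)"
    by (simp add: cmod_def)
  then show "cmod \<xi> * offdiag_row_sum d c n < cmod (of_real (f n) - \<i> * of_real s)"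
    using diagonal_dominance[of n] by simp
qed

lemma band_op_closure_range:
  assumes z: "z \<in> ell2"
  obtains w y where "(w, y) \<in> graph_closure (graph_D0 (band_op d c \<xi> f))"
    and "z = (\<lambda>n. y n - \<i> * of_real t * w n)"
proof -
  let ?J = "band_op d c \<xi> f"
  define L where "L x = (\<lambda>n. ?J x n - \<i> * of_real t * x n)" for x
  have L_ell2: "L x \<in> ell2" if "x \<in> D0" for x
    unfolding L_def by (rule ell2_diff[OF band_op_D0_ell2[OF that] ell2_mult[OF D0_imp_ell2[OF that]]])
  have L_lincomb: "L (\<lambda>n. a * x n + b * y n) = (\<lambda>n. a * L x n + b * L y n)" for a b x y
    unfolding L_def band_op_lincomb by (simp add: algebra_simps)
  obtain xs p where xs: "\<And>j. xs j \<in> D0" and L_Cauchy: "l2_Cauchy (\<lambda>j. L (xs j))"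
    and p: "p \<in> ell2" "l2_tendsto (\<lambda>j. L (xs j)) p"
    and orth: "\<And>y. y \<in> D0 \<Longrightarrow> l2inner (\<lambda>n. p n - z n) (L y) = 0"
    using ell2_range_projection[where L = L, OF L_ell2 L_lincomb z] by blast
  obtain w y where wy: "(w, y) \<in> graph_closure (graph_D0 ?J)"
    and lim: "l2_tendsto (\<lambda>j. L (xs j)) (\<lambda>n. y n - \<i> * of_real t * w n)"
    using band_op_minus_imag_Cauchy_limit[OF t_pos xs L_Cauchy[unfolded L_def]] unfolding L_def by blast
  have "p = (\<lambda>n. y n - \<i> * of_real t * w n)"
    using wy lim l2_tendsto_unique[OF L_ell2[OF xs] p(1) _ p(2)]
    by (auto simp: graph_closure_D0_iff intro: ell2_diff ell2_mult)
  moreover have "?J (\<lambda>n. p n - z n) = (\<lambda>n. \<i> * of_real (- t) * (p n - z n))"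
    using orth[OF basis_D0] unfolding L_def by (rule band_op_orthogonal_to_range[OF ell2_diff[OF p(1) z]])
  then have "(\<lambda>n. p n - z n) = (\<lambda>n. 0)"
    by (rule band_op_imag_eigenvector_eq_0[OF ell2_diff[OF p(1) z]]) (use t_pos in simp)
  ultimately show ?thesis
    using that wy by (simp add: fun_eq_iff)
qed

theorem band_op_ess_self_adjoint: "ess_self_adjoint (graph_D0 (band_op d c \<xi> f))"
  unfolding ess_self_adjoint_def self_adjoint_graph_def
proof (rule antisym)
  let ?J = "band_op d c \<xi> f"
  let ?T = "graph_closure (graph_D0 ?J)"
  show "?T \<subseteq> graph_adjoint ?T"
    by (rule band_op_closure_subset_adjoint)
  show "graph_adjoint ?T \<subseteq> ?T"
  proof clarify
    fix u v
    assume uv: "(u, v) \<in> graph_adjoint ?T"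
    then have u: "u \<in> ell2" and v: "v \<in> ell2"
      unfolding graph_adjoint_def by auto
    obtain w y where wy: "(w, y) \<in> ?T" and eq: "(\<lambda>n. v n - \<i> * of_real t * u n) = (\<lambda>n. y n - \<i> * of_real t * w n)"
      using band_op_closure_range[OF ell2_diff[OF v ell2_mult[OF u]]] by metis
    have w: "w \<in> ell2"
      using wy by (simp add: graph_closure_D0_iff)
    have "v = ?J u" "y = ?J w"
      using graph_adjoint_band_op uv wy band_op_closure_subset_adjoint by blast+
    then have "?J (\<lambda>n. 1 * u n + (- 1) * w n) = (\<lambda>n. \<i> * of_real t * (u n - w n))"
      unfolding band_op_lincomb using eq by (simp add: fun_eq_iff algebra_simps)
    then have "(\<lambda>n. u n - w n) = (\<lambda>n. 0)"
      using band_op_imag_eigenvector_eq_0[OF ell2_diff[OF u w], of t] t_pos by simp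
    then have "u = w" "v = y"
      using eq by (simp_all add: fun_eq_iff)
    with wy show "(u, v) \<in> ?T"
      by simp
  qed
qed

end

lemma Re_l2inner_band_op_lower_bound:
  assumes "\<And>n. 0 \<le> c n" and "\<And>n. - b \<le> f n - cmod \<xi> * offdiag_row_sum d c n" and "x \<in> D0"
  shows "- b * (l2norm x)\<^sup>2 \<le> Re (l2inner x (band_op d c \<xi> f x))"
proof -
  obtain S where S: "\<forall>n\<ge>S. x n = 0"
    using assms(3) by (auto simp: D0_iff_vanishing)
  have "- b * (l2norm x)\<^sup>2 = (\<Sum>n<S. - b * (cmod (x n))\<^sup>2)"
    using S by (simp add: l2norm_power2_vanishing[of S] sum_distrib_left)
  also have "\<dots> \<le> (\<Sum>n<S. (f n - cmod \<xi> * offdiag_row_sum d c n) * (cmod (x n))\<^sup>2)"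
    using assms(2) by (intro sum_mono mult_right_mono) simp_all
  also have "\<dots> \<le> Re (l2inner x (band_op d c \<xi> f x))"
    by (rule Re_l2inner_band_op_ge[OF assms(1) S])
  finally show ?thesis .
qed

section \<open>The operator \<open>A\<close>\<close>

lemma rising_Suc: "rising x (Suc s) = rising x s * (x + int s)"
  by (simp add: rising_def)

lemma rising_nonneg: "0 \<le> rising x s"
  by (simp add: rising_def prod_nonneg)

lemma rising_mono: "x \<le> y \<Longrightarrow> rising x s \<le> rising y s"
  by (auto simp: rising_def intro!: prod_mono prod_nonneg)

lemma rising_nonpos_eq_0: "x \<le> 0 \<Longrightarrow> 0 < s \<Longrightarrow> rising x s = 0"
  by (cases "x = 0") (auto simp: rising_def intro!: prod_zero bexI[of _ 0])

lemma beta_nonneg: "0 \<le> beta k l z"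
  by (simp add: beta_def rising_nonneg)

lemma beta_mono: "z \<le> z' \<Longrightarrow> beta k l z \<le> beta k l z'"
  unfolding beta_def by (intro real_sqrt_le_mono of_int_le_iff[THEN iffD2] mult_mono rising_mono rising_nonneg) simp_all

lemma beta_eq_0: "m < l \<Longrightarrow> beta k l (int m) = 0"
  by (simp add: beta_def rising_nonpos_eq_0)

lemma beta_of_nat:
  "l \<le> m \<Longrightarrow> beta k l (int m) = sqrt (of_int (rising (int (m - l) + 1) l)) * sqrt (of_int (rising (int (m - l) + 1) k))"
  by (simp add: beta_def real_sqrt_mult of_nat_diff)

lemma funpow_ann: "(ann ^^ l) x m = of_real (sqrt (of_int (rising (int m + 1) l))) * x (m + l)"
proof (induction l arbitrary: x)
  case 0
  then show ?case
    by (simp add: rising_def)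
next
  case (Suc l)
  have rising_step: "sqrt (of_int (rising (int m + 1) (Suc l)))
      = sqrt (of_int (rising (int m + 1) l)) * sqrt (real (m + l + 1))"
    by (simp add: rising_Suc real_sqrt_mult add_ac)
  have "(ann ^^ Suc l) x m = (ann ^^ l) (ann x) m"
    by (simp only: funpow_Suc_right comp_def)
  also have "\<dots> = of_real (sqrt (of_int (rising (int m + 1) l))) * ann x (m + l)"
    by (rule Suc.IH)
  also have "\<dots> = of_real (sqrt (of_int (rising (int m + 1) (Suc l)))) * x (m + Suc l)"
    by (simp add: ann_def rising_step)
  finally show ?case .
qed

lemma funpow_cre:
  "(cre ^^ k) y n = (if k \<le> n then of_real (sqrt (of_int (rising (int (n - k) + 1) k))) * y (n - k) else 0)"
proof (induction k arbitrary: n)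
  case 0
  then show ?case
    by (simp add: rising_def)
next
  case (Suc k)
  show ?case
  proof (cases n)
    case 0
    then show ?thesis
      by (simp add: cre_def)
  next
    case (Suc m)
    have step: "(cre ^^ Suc k) y n = of_real (sqrt (real n)) * (cre ^^ k) y m"
      by (simp add: cre_def Suc)
    show ?thesis
    proof (cases "k \<le> m")
      case True
      have "sqrt (of_int (rising (int (m - k) + 1) (Suc k))) = sqrt (real n) * sqrt (of_int (rising (int (m - k) + 1) k))"
        using True by (simp add: rising_Suc real_sqrt_mult Suc of_nat_diff add_ac)
      moreover have "(cre ^^ Suc k) y n
          = of_real (sqrt (real n)) * (of_real (sqrt (of_int (rising (int (m - k) + 1) k))) * y (m - k))"
        using step Suc.IH[of m] True by simp
      ultimately show ?thesis
        using True by (simp add: Suc)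
    next
      case False
      then show ?thesis
        using step Suc.IH[of m] by (simp add: Suc)
    qed
  qed
qed

lemma A_op_eq_band_op:
  assumes "l < k"
  shows "A_op k l \<xi> f = band_op (k - l) (\<lambda>m. beta k l (int m)) \<xi> f"
proof (intro ext)
  fix x n
  have raise: "(cre ^^ k) ((ann ^^ l) x) n
      = (if k - l \<le> n then of_real (beta k l (int (n - (k - l)))) * x (n - (k - l)) else 0)"
  proof (cases "k \<le> n")
    case True
    have idx: "l \<le> n - (k - l)" "n - (k - l) - l = n - k" "n - k + l = n - (k - l)" "k - l \<le> n"
      using True assms by auto
    have "(cre ^^ k) ((ann ^^ l) x) n
        = of_real (sqrt (of_int (rising (int (n - k) + 1) k))) * (ann ^^ l) x (n - k)"
      by (simp only: funpow_cre if_P[OF True])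
    also have "\<dots> = of_real (sqrt (of_int (rising (int (n - k) + 1) k))
        * sqrt (of_int (rising (int (n - k) + 1) l))) * x (n - (k - l))"
      by (simp only: funpow_ann idx(3) of_nat_add of_int_add of_real_mult mult.assoc)
    also have "\<dots> = of_real (beta k l (int (n - (k - l)))) * x (n - (k - l))"
      by (simp only: beta_of_nat[OF idx(1)] idx(2) mult.commute)
    finally show ?thesis
      using idx(4) by simp
  next
    case False
    then have "k - l \<le> n \<Longrightarrow> n - (k - l) < l"
      using assms by linarith
    then show ?thesis
      using False beta_eq_0[of "n - (k - l)" l k] by (auto simp: funpow_cre)
  qed
  have lower: "(cre ^^ l) ((ann ^^ k) x) n = of_real (beta k l (int n)) * x (n + (k - l))"
    using assms by (cases "l \<le> n") (simp_all add: funpow_cre funpow_ann beta_of_nat beta_eq_0 algebra_simps)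
  show "A_op k l \<xi> f x n = band_op (k - l) (\<lambda>m. beta k l (int m)) \<xi> f x n"
    unfolding A_op_def band_op_def numfun_def raise lower by (simp add: algebra_simps)
qed

lemma mono_beta: "mono (\<lambda>m. beta k l (int m))"
  by (simp add: mono_def beta_mono)

lemma beta_le_scaled:
  assumes "2 < \<kappa>" "n < N"
  shows "beta k l (int n) \<le> beta k l (int N - 1) * (\<kappa> / (\<kappa> - 2))"
proof -
  have "beta k l (int n) \<le> beta k l (int N - 1) * 1"
    using assms(2) by (simp add: beta_mono)
  also have "\<dots> \<le> beta k l (int N - 1) * (\<kappa> / (\<kappa> - 2))"
    using assms(1) by (intro mult_left_mono) (simp_all add: beta_nonneg)
  finally show ?thesis .
qed

lemma offdiag_row_sum_le_mono:
  assumes "mono c" "\<And>n. 0 \<le> c n"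
  shows "cmod \<xi> * offdiag_row_sum d c n \<le> 2 * cmod \<xi> * c n"
proof -
  have "offdiag_row_sum d c n \<le> 2 * c n"
    using assms by (auto simp: offdiag_row_sum_def mono_def)
  then have "cmod \<xi> * offdiag_row_sum d c n \<le> cmod \<xi> * (2 * c n)"
    by (rule mult_left_mono) simp
  then show ?thesis
    by (simp add: mult.left_commute)
qed

lemma offdiag_row_sum_lt_imag_shift:
  assumes "mono c" "\<And>n. 0 \<le> c n" "\<And>n. N \<le> n \<Longrightarrow> 2 * cmod \<xi> * c n \<le> f n"
  shows "cmod \<xi> * offdiag_row_sum d c n < sqrt ((f n)\<^sup>2 + (2 * cmod \<xi> * c N + 1)\<^sup>2)"
proof -
  define t where "t = 2 * cmod \<xi> * c N + 1"
  have "0 < t"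
    using assms(2)[of N] unfolding t_def by (simp add: add_nonneg_pos)
  have "2 * cmod \<xi> * c n < sqrt ((f n)\<^sup>2 + t\<^sup>2)"
  proof (cases "N \<le> n")
    case True
    have "f n < sqrt ((f n)\<^sup>2 + t\<^sup>2)"
      using \<open>0 < t\<close> by (intro real_less_rsqrt) simp
    then show ?thesis
      using assms(3)[OF True] by linarith
  next
    case False
    have "2 * cmod \<xi> * c n \<le> 2 * cmod \<xi> * c N"
      using assms(1) False by (intro mult_left_mono) (simp_all add: mono_def)
    also have "\<dots> < t"
      by (simp add: t_def)
    also have "t \<le> sqrt ((f n)\<^sup>2 + t\<^sup>2)"
      by (simp add: real_le_rsqrt)
    finally show ?thesis .
  qed
  then show ?thesis
    using offdiag_row_sum_le_mono[OF assms(1,2), of \<xi> d n] by (simp add: t_def)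
qed

lemma offdiag_row_sum_deficit:
  assumes "mono c" "\<And>n. 0 \<le> c n" "\<And>n. 0 \<le> f n" "\<And>n. N \<le> n \<Longrightarrow> 2 * cmod \<xi> * c n \<le> f n"
    and "\<And>n. n < N \<Longrightarrow> c n \<le> B" "0 \<le> B"
  shows "- (2 * cmod \<xi> * B) \<le> f n - cmod \<xi> * offdiag_row_sum d c n"
proof -
  have "2 * cmod \<xi> * c n \<le> f n + 2 * cmod \<xi> * B"
  proof (cases "N \<le> n")
    case True
    then show ?thesis
      using assms(4)[OF True] assms(6) by (simp add: add_increasing2)
  next
    case False
    then have "2 * cmod \<xi> * c n \<le> 2 * cmod \<xi> * B"
      using assms(5) by (intro mult_left_mono) simp_all
    then show ?thesis
      using assms(3)[of n] by linarith
  qed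
  then show ?thesis
    using offdiag_row_sum_le_mono[OF assms(1,2), of \<xi> d n] by linarith
qed

theorem proposition3p5:
  fixes k l N :: nat and \<xi> :: complex and f :: "nat \<Rightarrow> real" and \<kappa> :: real
  assumes "l < k"
    and "\<forall>n. f n \<ge> 0"
    and "\<kappa> \<ge> 2"
    and "\<forall>n\<ge>N. f n \<ge> \<kappa> * cmod \<xi> * beta k l (int n)"
  shows "ess_self_adjoint (graph_D0 (A_op k l \<xi> f))
     \<and> (\<kappa> > 2 \<longrightarrow> (\<forall>\<psi>\<in>D0.
           Im (l2inner \<psi> (A_op k l \<xi> f \<psi>)) = 0 \<and>
           Re (l2inner \<psi> (A_op k l \<xi> f \<psi>))
             \<ge> - (2 * cmod \<xi> * beta k l (int N - 1) * \<kappa> / (\<kappa> - 2)) * (l2norm \<psi>)\<^sup>2))"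
proof -
  define c where "c m = beta k l (int m)" for m
  have A_eq: "A_op k l \<xi> f = band_op (k - l) c \<xi> f"
    unfolding c_def by (rule A_op_eq_band_op[OF assms(1)])
  have c: "mono c" "\<And>n. 0 \<le> c n"
    unfolding c_def by (simp_all add: mono_beta beta_nonneg)
  have f: "\<And>n. 0 \<le> f n"
    using assms(2) by blast
  have dominated: "2 * cmod \<xi> * c n \<le> f n" if "N \<le> n" for n
    using mult_right_mono[OF mult_right_mono[OF assms(3) norm_ge_zero[of \<xi>]] c(2)[of n]]
      assms(4)[rule_format, OF that]
    unfolding c_def by linarith
  have "ess_self_adjoint (graph_D0 (band_op (k - l) c \<xi> f))"
    by (rule band_op_ess_self_adjoint[OF c(2) _ offdiag_row_sum_lt_imag_shift[OF c dominated]])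
      (simp add: c(2) add_nonneg_pos)
  moreover have "- (2 * cmod \<xi> * beta k l (int N - 1) * \<kappa> / (\<kappa> - 2)) * (l2norm \<psi>)\<^sup>2
      \<le> Re (l2inner \<psi> (band_op (k - l) c \<xi> f \<psi>))" if "2 < \<kappa>" "\<psi> \<in> D0" for \<psi>
  proof -
    define B where "B = beta k l (int N - 1) * (\<kappa> / (\<kappa> - 2))"
    have "- (2 * cmod \<xi> * B) \<le> f n - cmod \<xi> * offdiag_row_sum (k - l) c n" for n
      by (rule offdiag_row_sum_deficit[OF c f dominated])
        (use beta_le_scaled[OF that(1)] that(1) in \<open>simp_all add: B_def c_def beta_nonneg\<close>)
    then have "- (2 * cmod \<xi> * B) * (l2norm \<psi>)\<^sup>2 \<le> Re (l2inner \<psi> (band_op (k - l) c \<xi> f \<psi>))"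
      by (rule Re_l2inner_band_op_lower_bound[OF c(2) _ that(2)])
    then show ?thesis
      by (simp add: B_def)
  qed
  ultimately show ?thesis
    using Im_l2inner_band_op by (simp add: A_eq)
qed

end
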